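(* Let $\mathsf{PAULI}_n$ be the class of all $n$-qubit Pauli channels and let $\varepsilon<1/2$. Any online learner for $\mathsf{PAULI}_n$ makes $\Omega(n)$ many $\varepsilon$-mistakes against a worst-case adversary. This remains true even if the adversary is forced to decide on a Pauli channel before the interaction with the learner.
   Context: An $n$-qubit Pauli channel is $\mathcal{P}(\rho)=\sum_{\vec z,\vec x\in\{0,1\}^n}p_{\vec z,\vec x}P^{\vec z,\vec x}\rho P^{\vec z,\vec x\dagger}$ for a probability vector $(p_{\vec z,\vec x})$, where $P^{\vec z,\vec x}=\mathrm{i}^{\vec z\cdot\vec x}Z^{\vec z}X^{\vec x}$. Online learning a class $\mathsf{C}$: in each round the adversary presents a channel test operator $E_{A,B}$ ($E_{A,B}\geq0$ on two $n$-qubit systems with $E_{A,B}\leq\sigma_A\otimes\mathbb{1}_B$ for some density operator $\sigma_A$), the learner predicts a value in $[0,1]$ based on past information, and the adversary reveals the true value $\mathrm{Tr}[E_{A,B}C^{\mathcal{N}}_{A,B}]$ for the target $\mathcal{N}\in\mathsf{C}$, with $C^{\mathcal{N}}_{A,B}=\sum_{i,j}|i\rangle\langle j|\otimes\mathcal{N}(|i\rangle\langle j|)$. An $\varepsilon$-mistake is a round where the prediction differs from the true value by more than $\varepsilon$. *)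

theory Defs
  imports Complex_Main
begin

text \<open>Matrices on a d-dimensional space are represented as functions nat \<Rightarrow> nat \<Rightarrow> complex;
  only entries with indices below d are meaningful. Computational basis states of n qubits
  are indexed by k < 2^n, the i-th bit of k being the i-th qubit.\<close>

type_synonym cmat = "nat \<Rightarrow> nat \<Rightarrow> complex"

definition qdim :: "nat \<Rightarrow> nat" where "qdim n = 2 ^ n"

definition bdot :: "nat \<Rightarrow> nat \<Rightarrow> nat \<Rightarrow> nat" where
  "bdot n z a = card {i. i < n \<and> bit z i \<and> bit a i}"

text \<open>P^{z,x} = i^{z.x} Z^z X^x, with X^x |c> = |c xor x>, Z^z |r> = (-1)^{z.r} |r>.\<close>
definition pauli :: "nat \<Rightarrow> nat \<Rightarrow> nat \<Rightarrow> cmat" where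
  "pauli n z x = (\<lambda>r c. if r = xor c x then \<i> ^ bdot n z x * (-1) ^ bdot n z r else 0)"

definition mmult :: "nat \<Rightarrow> cmat \<Rightarrow> cmat \<Rightarrow> cmat" where
  "mmult d A B = (\<lambda>i j. \<Sum>k<d. A i k * B k j)"

definition adj :: "cmat \<Rightarrow> cmat" where
  "adj A = (\<lambda>i j. cnj (A j i))"

definition is_pauli_prob :: "nat \<Rightarrow> (nat \<Rightarrow> nat \<Rightarrow> real) \<Rightarrow> bool" where
  "is_pauli_prob n p \<longleftrightarrow> (\<forall>z x. 0 \<le> p z x) \<and> (\<Sum>z<qdim n. \<Sum>x<qdim n. p z x) = 1"

definition pauli_channel :: "nat \<Rightarrow> (nat \<Rightarrow> nat \<Rightarrow> real) \<Rightarrow> cmat \<Rightarrow> cmat" where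
  "pauli_channel n p \<rho> = (\<lambda>i j. \<Sum>z<qdim n. \<Sum>x<qdim n.
      complex_of_real (p z x) *
      mmult (qdim n) (mmult (qdim n) (pauli n z x) \<rho>) (adj (pauli n z x)) i j)"

definition PAULI :: "nat \<Rightarrow> (cmat \<Rightarrow> cmat) set" where
  "PAULI n = {pauli_channel n p | p. is_pauli_prob n p}"

definition ketbra :: "nat \<Rightarrow> nat \<Rightarrow> cmat" where
  "ketbra i j = (\<lambda>a b. if a = i \<and> b = j then 1 else 0)"

text \<open>Choi operator C_{A,B} = sum_{i,j} |i><j| \<otimes> N(|i><j|); index of |a>_A|b>_B is a*d+b.\<close>
definition choi :: "nat \<Rightarrow> (cmat \<Rightarrow> cmat) \<Rightarrow> cmat" where
  "choi n N = (\<lambda>r c. N (ketbra (r div qdim n) (c div qdim n)) (r mod qdim n) (c mod qdim n))"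

definition psd :: "nat \<Rightarrow> cmat \<Rightarrow> bool" where
  "psd d A \<longleftrightarrow> (\<forall>v :: nat \<Rightarrow> complex.
      Im (\<Sum>i<d. \<Sum>j<d. cnj (v i) * A i j * v j) = 0 \<and>
      0 \<le> Re (\<Sum>i<d. \<Sum>j<d. cnj (v i) * A i j * v j))"

definition mtrace :: "nat \<Rightarrow> cmat \<Rightarrow> complex" where
  "mtrace d A = (\<Sum>i<d. A i i)"

definition density :: "nat \<Rightarrow> cmat \<Rightarrow> bool" where
  "density d \<sigma> \<longleftrightarrow> psd d \<sigma> \<and> mtrace d \<sigma> = 1"

definition tensor_id :: "nat \<Rightarrow> cmat \<Rightarrow> cmat" where
  "tensor_id n \<sigma> = (\<lambda>r c. \<sigma> (r div qdim n) (c div qdim n) *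
      (if r mod qdim n = c mod qdim n then 1 else 0))"

definition channel_test :: "nat \<Rightarrow> cmat \<Rightarrow> bool" where
  "channel_test n E \<longleftrightarrow> psd (qdim n * qdim n) E \<and>
     (\<exists>\<sigma>. density (qdim n) \<sigma> \<and>
          psd (qdim n * qdim n) (\<lambda>r c. tensor_id n \<sigma> r c - E r c))"

text \<open>True value Tr[E C^N] (real for a channel test operator and a CPTP map).\<close>
definition test_value :: "nat \<Rightarrow> cmat \<Rightarrow> (cmat \<Rightarrow> cmat) \<Rightarrow> real" where
  "test_value n E N = Re (mtrace (qdim n * qdim n) (mmult (qdim n * qdim n) E (choi n N)))"

text \<open>A (deterministic) online learner maps the history of (test operator, revealed value)
  pairs and the current test operator to a prediction.\<close>
type_synonym learner = "(cmat \<times> real) list \<Rightarrow> cmat \<Rightarrow> real"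

definition valid_learner :: "learner \<Rightarrow> bool" where
  "valid_learner L \<longleftrightarrow> (\<forall>h E. 0 \<le> L h E \<and> L h E \<le> 1)"

fun mistakes :: "real \<Rightarrow> nat \<Rightarrow> learner \<Rightarrow> (cmat \<Rightarrow> cmat) \<Rightarrow> cmat list \<Rightarrow> (cmat \<times> real) list \<Rightarrow> nat" where
  "mistakes \<epsilon> n L N [] h = 0"
| "mistakes \<epsilon> n L N (E # Es) h =
     (if \<bar>L h E - test_value n E N\<bar> > \<epsilon> then 1 else 0)
     + mistakes \<epsilon> n L N Es (h @ [(E, test_value n E N)])"

end

theory Submission
  imports Defs
begin

text \<open>The adversary only needs the bit-flip channels \<open>\<rho> \<mapsto> X\<^sup>x \<rho> X\<^sup>x\<close>, \<open>x < 2\<^sup>n\<close>, and the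
  \<open>n\<close> tests "feed in \<open>|0\<rangle>\<close> and measure whether output qubit \<open>i\<close> is \<open>1\<close>": on the channel
  \<open>X\<^sup>x\<close> the \<open>i\<close>-th test has value \<open>x\<^sub>i\<close>. Since the learner is deterministic, the adversary
  can simulate it in advance and fix each \<open>x\<^sub>i\<close> to be \<open>1\<close> iff the learner would predict
  less than \<open>1/2\<close> in round \<open>i\<close>; then every round is an \<open>\<epsilon>\<close>-mistake for \<open>\<epsilon> < 1/2\<close>, whatever the
  learner predicts, giving \<open>n\<close> mistakes.\<close>

lemma qdim_pos: "0 < qdim n"
  by (simp add: qdim_def)

lemma psd_diagonal:
  assumes "\<And>i j. A i j = (if i = j then complex_of_real (f i) else 0)" and "\<And>i. 0 \<le> f i"
  shows "psd d A"
proof -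
  have "(\<Sum>i<d. \<Sum>j<d. cnj (v i) * A i j * v j) = complex_of_real (\<Sum>i<d. f i * (cmod (v i))\<^sup>2)"
    for v
  proof -
    have "(\<Sum>i<d. \<Sum>j<d. cnj (v i) * A i j * v j) = (\<Sum>i<d. cnj (v i) * complex_of_real (f i) * v i)"
      by (rule sum.cong) (simp_all add: assms(1) if_distrib if_distribR sum.delta cong: if_cong)
    also have "\<dots> = (\<Sum>i<d. complex_of_real (f i * (cmod (v i))\<^sup>2))"
      by (rule sum.cong) (simp_all only: of_real_mult complex_norm_square, simp add: mult_ac)
    finally show ?thesis by simp
  qed
  then show ?thesis
    unfolding psd_def using assms(2) by (simp add: sum_nonneg)
qed

lemma sum_delta_of_bool:
  fixes f :: "nat \<Rightarrow> 'a::semiring_1"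
  assumes "a < d"
  shows "(\<Sum>k<d. of_bool (k = a) * f k) = f a"
proof -
  have "{..<d} \<inter> {k. k = a} = {a}" using assms by auto
  then show ?thesis by simp
qed

lemma sum_sum_delta_of_bool:
  fixes f :: "nat \<Rightarrow> nat \<Rightarrow> 'a::semiring_1"
  assumes "a < d" "b < d"
  shows "(\<Sum>k<d. \<Sum>l<d. of_bool (k = a \<and> l = b) * f k l) = f a b"
  using assms by (simp add: of_bool_conj mult.assoc sum_distrib_left[symmetric] sum_delta_of_bool)

definition pauli_point_prob :: "nat \<Rightarrow> nat \<Rightarrow> nat \<Rightarrow> nat \<Rightarrow> real" where
  "pauli_point_prob z x = (\<lambda>z' x'. of_bool (z' = z \<and> x' = x))"

lemma is_pauli_prob_point:
  assumes "z < qdim n" "x < qdim n"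
  shows "is_pauli_prob n (pauli_point_prob z x)"
  using sum_sum_delta_of_bool[OF assms, of "\<lambda>_ _. 1 :: real"]
  by (simp add: is_pauli_prob_def pauli_point_prob_def)

lemma pauli_channel_point:
  assumes "z < qdim n" "x < qdim n"
  shows "pauli_channel n (pauli_point_prob z x) \<rho> =
           mmult (qdim n) (mmult (qdim n) (pauli n z x) \<rho>) (adj (pauli n z x))"
proof (intro ext)
  fix i j
  have "complex_of_real (pauli_point_prob z x z' x') = of_bool (z' = z \<and> x' = x)" for z' x'
    by (simp add: pauli_point_prob_def)
  then show "pauli_channel n (pauli_point_prob z x) \<rho> i j =
      mmult (qdim n) (mmult (qdim n) (pauli n z x) \<rho>) (adj (pauli n z x)) i j"
    unfolding pauli_channel_def by (simp only:) (rule sum_sum_delta_of_bool[OF assms])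
qed

lemma pauli_column_0: "pauli n z x r 0 = (if r = x then \<i> ^ bdot n z x * (-1) ^ bdot n z x else 0)"
  by (simp add: pauli_def)

lemma pauli_conj_ketbra_0:
  "mmult (qdim n) (mmult (qdim n) (pauli n z x) (ketbra 0 0)) (adj (pauli n z x)) = ketbra x x"
proof -
  have "mmult (qdim n) (pauli n z x) (ketbra 0 0) r k = of_bool (k = 0) * pauli n z x r 0" for r k
    using qdim_pos[of n] by (simp add: mmult_def ketbra_def if_distrib if_distribR cong: if_cong)
  then have "mmult (qdim n) (mmult (qdim n) (pauli n z x) (ketbra 0 0)) (adj (pauli n z x)) r c =
      pauli n z x r 0 * cnj (pauli n z x c 0)" for r c
    using qdim_pos[of n] by (simp add: mmult_def adj_def mult.assoc sum_delta_of_bool del: sum_of_bool_mult_eq)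
  moreover have "\<i> ^ k * (-1) ^ k * cnj (\<i> ^ k * (-1) ^ k) = 1" for k
    by (simp add: power_mult_distrib[symmetric] flip: complex_norm_square)
  ultimately show ?thesis
    by (intro ext) (simp add: pauli_column_0 ketbra_def)
qed

text \<open>Index \<open>a * 2\<^sup>n + b\<close> of \<open>|a\<rangle>\<^sub>A|b\<rangle>\<^sub>B\<close> is below \<open>2\<^sup>n\<close> iff \<open>a = 0\<close>, so this is
  \<open>|0\<rangle>\<langle>0|\<^sub>A \<otimes> \<Pi>\<^sub>i\<close> with \<open>\<Pi>\<^sub>i\<close> the projector onto "qubit \<open>i\<close> is \<open>1\<close>".\<close>
definition bit_test :: "nat \<Rightarrow> nat \<Rightarrow> cmat" where
  "bit_test n i = (\<lambda>r c. of_bool (r = c \<and> r < qdim n \<and> bit r i))"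

lemma channel_test_bit_test: "channel_test n (bit_test n i)"
proof -
  have "psd (qdim n * qdim n) (bit_test n i)"
    by (rule psd_diagonal[where f = "\<lambda>r. of_bool (r < qdim n \<and> bit r i)"])
      (auto simp: bit_test_def)
  moreover have "density (qdim n) (ketbra 0 0)"
    unfolding density_def mtrace_def using qdim_pos[of n]
    by (auto intro!: psd_diagonal[where f = "\<lambda>r. of_bool (r = 0)"] simp: ketbra_def)
  moreover have "psd (qdim n * qdim n) (\<lambda>r c. tensor_id n (ketbra 0 0) r c - bit_test n i r c)"
    by (rule psd_diagonal[where f = "\<lambda>r. of_bool (r < qdim n \<and> \<not> bit r i)"])
      (use qdim_pos[of n] in \<open>auto simp: tensor_id_def ketbra_def bit_test_def div_eq_0_iff\<close>)
  ultimately show ?thesis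
    unfolding channel_test_def by blast
qed

lemma test_value_bit_test:
  "test_value n (bit_test n i) N = (\<Sum>r | r < qdim n \<and> bit r i. Re (N (ketbra 0 0) r r))"
proof -
  let ?D = "qdim n * qdim n" and ?S = "{r. r < qdim n \<and> bit r i}"
  have "mmult ?D (bit_test n i) (choi n N) r r = of_bool (r \<in> ?S) * choi n N r r"
    if "r < ?D" for r
  proof -
    have "bit_test n i r k = of_bool (k = r) * of_bool (r \<in> ?S)" for k
      by (auto simp: bit_test_def)
    then show ?thesis
      unfolding mmult_def using that by (simp add: mult.assoc sum_delta_of_bool del: sum_of_bool_mult_eq)
  qed
  then have "mtrace ?D (mmult ?D (bit_test n i) (choi n N)) = (\<Sum>r<?D. of_bool (r \<in> ?S) * choi n N r r)"
    unfolding mtrace_def by simp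
  also have "\<dots> = (\<Sum>r\<in>?S. choi n N r r)"
  proof -
    have "{..<?D} \<inter> {r. r \<in> ?S} = ?S"
      by (auto simp: qdim_def intro: less_le_trans)
    then show ?thesis by simp
  qed
  also have "\<dots> = (\<Sum>r\<in>?S. N (ketbra 0 0) r r)"
    by (rule sum.cong) (simp_all add: choi_def)
  finally show ?thesis
    unfolding test_value_def by simp
qed

lemma test_value_bit_test_bit_flip:
  assumes "x < qdim n"
  shows "test_value n (bit_test n i) (pauli_channel n (pauli_point_prob 0 x)) = of_bool (bit x i)"
proof -
  have "pauli_channel n (pauli_point_prob 0 x) (ketbra 0 0) = ketbra x x"
    using qdim_pos assms by (simp add: pauli_channel_point pauli_conj_ketbra_0)
  moreover have "Re (ketbra x x r r) = of_bool (r = x)" for r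
    by (simp add: ketbra_def)
  moreover have "{r. r < qdim n \<and> bit r i} \<inter> {r. r = x} = (if bit x i then {x} else {})"
    using assms by auto
  ultimately show ?thesis
    by (simp add: test_value_bit_test)
qed

definition contrary_bit :: "learner \<Rightarrow> (cmat \<times> real) list \<Rightarrow> cmat \<Rightarrow> bool" where
  "contrary_bit L h E \<longleftrightarrow> L h E < 1/2"

definition contrary_history :: "learner \<Rightarrow> (cmat \<times> real) list \<Rightarrow> cmat list \<Rightarrow> (cmat \<times> real) list" where
  "contrary_history L = foldl (\<lambda>h E. h @ [(E, of_bool (contrary_bit L h E))])"

lemma mistakes_contrary:
  assumes "\<epsilon> < 1/2"
    and "\<And>k. k < length Es \<Longrightarrow>
      test_value n (Es ! k) N = of_bool (contrary_bit L (contrary_history L h (take k Es)) (Es ! k))"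
  shows "mistakes \<epsilon> n L N Es h = length Es"
  using assms(2)
proof (induction Es arbitrary: h)
  case Nil
  then show ?case by simp
next
  case (Cons E Es)
  have first: "test_value n E N = of_bool (contrary_bit L h E)"
    using Cons.prems[of 0] by (simp add: contrary_history_def)
  then have "\<epsilon> < \<bar>L h E - test_value n E N\<bar>"
    using assms(1) by (simp add: contrary_bit_def)
  moreover have "mistakes \<epsilon> n L N Es (h @ [(E, test_value n E N)]) = length Es"
    using Cons.prems[of "Suc _"] first by (intro Cons.IH) (simp add: contrary_history_def)
  ultimately show ?case by simp
qed

lemma exists_bit_flip_forcing_mistakes:
  assumes "\<epsilon> < 1/2"
  obtains x where "x < qdim n"
    and "mistakes \<epsilon> n L (pauli_channel n (pauli_point_prob 0 x)) (map (bit_test n) [0..<n]) [] = n"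
proof
  define Es where "Es = map (bit_test n) [0..<n]"
  define bs where "bs = map (\<lambda>k. contrary_bit L (contrary_history L [] (take k Es)) (Es ! k)) [0..<n]"
  define x :: nat where "x = horner_sum of_bool 2 bs"
  show x: "x < qdim n"
    using horner_sum_bound[of bs] by (simp add: x_def bs_def qdim_def)
  have "mistakes \<epsilon> n L (pauli_channel n (pauli_point_prob 0 x)) Es [] = length Es"
  proof (rule mistakes_contrary[OF assms])
    fix k assume "k < length Es"
    then have "k < n" by (simp add: Es_def)
    then have "test_value n (Es ! k) (pauli_channel n (pauli_point_prob 0 x)) = of_bool (bs ! k)"
      using test_value_bit_test_bit_flip[OF x]
      by (simp add: Es_def x_def bit_horner_sum_bit_iff bs_def)
    also have "bs ! k = contrary_bit L (contrary_history L [] (take k Es)) (Es ! k)"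
      using \<open>k < n\<close> by (simp add: bs_def)
    finally show "test_value n (Es ! k) (pauli_channel n (pauli_point_prob 0 x)) =
        of_bool (contrary_bit L (contrary_history L [] (take k Es)) (Es ! k))" .
  qed
  then show "mistakes \<epsilon> n L (pauli_channel n (pauli_point_prob 0 x)) Es [] = n"
    by (simp add: Es_def)
qed

theorem corollary4p6:
  fixes \<epsilon> :: real
  assumes "\<epsilon> < 1/2"
  shows "\<exists>c>0. \<exists>n0. \<forall>n\<ge>n0. \<forall>L. valid_learner L \<longrightarrow>
           (\<exists>N\<in>PAULI n. \<exists>Es. (\<forall>E\<in>set Es. channel_test n E) \<and>
               c * real n \<le> real (mistakes \<epsilon> n L N Es []))"
proof (intro exI[of _ 1] conjI allI impI)
  fix n :: nat and L :: learner
  let ?Es = "map (bit_test n) [0..<n]"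
  obtain x where x: "x < qdim n"
    and mistakes: "mistakes \<epsilon> n L (pauli_channel n (pauli_point_prob 0 x)) ?Es [] = n"
    using exists_bit_flip_forcing_mistakes[OF assms] .
  let ?N = "pauli_channel n (pauli_point_prob 0 x)"
  have "?N \<in> PAULI n"
    unfolding PAULI_def using is_pauli_prob_point[OF qdim_pos x] by blast
  with mistakes show "\<exists>N\<in>PAULI n. \<exists>Es. (\<forall>E\<in>set Es. channel_test n E) \<and>
      1 * real n \<le> real (mistakes \<epsilon> n L N Es [])"
    by (intro bexI[of _ ?N] exI[of _ ?Es]) (simp_all add: channel_test_bit_test)
qed simp

end
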